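(* Let $n\in\mathbb{N}$, let $f_1,\ldots,f_n$ be Alpert multiwavelets of multiplicity $n$, and let $1\le k\le n$. For $j\ge1$ let $a_j$ be the real number with $P_{j,j-1}(x)-P_{j-1,j}(x)=a_jP_{j-1,j-1}(x)$. Then there are real numbers $c_j$ and $d_j$ such that, almost everywhere on $[-1,1]$, \[ f_k=\begin{cases}\displaystyle\sum_{j=(k+n)/2}^{n} c_j\,Q_{j,j}, & k+n \text{ even},\\[2mm] \displaystyle\frac12\sum_{j=(k+n+1)/2}^{n} a_j d_{j-1}\,Q_{j,j}+\sum_{j=(k+n-1)/2}^{n-1} d_j\,Q_{j+1,j}, & k+n\text{ odd}.\end{cases} \]
   Context: Alpert multiwavelets of multiplicity $n\in\mathbb{N}$: real functions $f_1,\ldots,f_n$ supported on $[-1,1]$ such that (i) the restriction of each $f_i$ to $(0,1)$ is a polynomial of degree at most $n-1$; (ii) $f_k(-t)=(-1)^{k+n-1}f_k(t)$ for $t\in(0,1)$; (iii) $\int_{-1}^1 f_i(t)f_j(t)\,dt=\delta_{i,j}$ for $1\le i,j\le n$; (iv) $\int_{-1}^1 f_k(t)t^i\,dt=0$ for $i=0,1,\ldots,k+n-2$. Type I Legendre–Angelesco polynomials: for integers $n,m\ge 0$ with $n+m\ge1$, $(A_{n,m},B_{n,m})$ is the unique pair of polynomials with $\deg A_{n,m}\le n-1$, $\deg B_{n,m}\le m-1$ (degree $\le -1$ meaning the zero polynomial) such that, writing $Q_{n,m}=A_{n,m}\chi_{[-1,0]}+B_{n,m}\chi_{[0,1]}$,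 one has $\int_{-1}^1 Q_{n,m}(x)x^k\,dx=0$ for $0\le k\le n+m-2$ and $\int_{-1}^1 Q_{n,m}(x)x^{n+m-1}\,dx=1$. Type II Legendre–Angelesco polynomials: for $n,m\ge0$, $P_{n,m}$ is the unique monic polynomial of degree $n+m$ with $\int_{-1}^0 P_{n,m}(x)x^k\,dx=0$ for $0\le k\le n-1$ and $\int_0^1 P_{n,m}(x)x^k\,dx=0$ for $0\le k\le m-1$. (The difference $P_{j,j-1}-P_{j-1,j}$ is a constant multiple of $P_{j-1,j-1}$, which defines $a_j$.) *)

theory Defs
  imports "HOL-Analysis.Analysis" "HOL-Computational_Algebra.Polynomial"
begin

definition alpert_multiwavelets :: "nat \<Rightarrow> (nat \<Rightarrow> real \<Rightarrow> real) \<Rightarrow> bool" where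
  "alpert_multiwavelets n f \<longleftrightarrow>
     (\<forall>i\<in>{1..n}. \<forall>t. t \<notin> {-1..1} \<longrightarrow> f i t = 0) \<and>
     (\<forall>i\<in>{1..n}. \<exists>p :: real poly. degree p \<le> n - 1 \<and> (\<forall>t\<in>{0<..<1}. f i t = poly p t)) \<and>
     (\<forall>k\<in>{1..n}. \<forall>t\<in>{0<..<1}. f k (-t) = (-1) ^ (k + n - 1) * f k t) \<and>
     (\<forall>i\<in>{1..n}. \<forall>j\<in>{1..n}. (LBINT t=-1..1. f i t * f j t) = (if i = j then 1 else 0)) \<and>
     (\<forall>k\<in>{1..n}. \<forall>i::nat. i \<le> k + n - 2 \<longrightarrow> (LBINT t=-1..1. f k t * t ^ i) = 0)"

text \<open>Type I Legendre--Angelesco pair (A_{n,m}, B_{n,m}); degree \<le> -1 means zero polynomial.\<close>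
definition typeI_cond :: "nat \<Rightarrow> nat \<Rightarrow> real poly \<Rightarrow> real poly \<Rightarrow> bool" where
  "typeI_cond n m A B \<longleftrightarrow>
     (if n = 0 then A = 0 else degree A \<le> n - 1) \<and>
     (if m = 0 then B = 0 else degree B \<le> m - 1) \<and>
     (\<forall>k::nat. k + 2 \<le> n + m \<longrightarrow>
        (LBINT x=-1..1. (poly A x * indicator {-1..0} x + poly B x * indicator {0..1} x) * x ^ k) = 0) \<and>
     (LBINT x=-1..1. (poly A x * indicator {-1..0} x + poly B x * indicator {0..1} x) * x ^ (n + m - 1)) = 1"

definition typeI_pair :: "nat \<Rightarrow> nat \<Rightarrow> real poly \<times> real poly" where
  "typeI_pair n m = (THE AB. typeI_cond n m (fst AB) (snd AB))"

definition LA_Q :: "nat \<Rightarrow> nat \<Rightarrow> real \<Rightarrow> real" where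
  "LA_Q n m x = poly (fst (typeI_pair n m)) x * indicator {-1..0} x
              + poly (snd (typeI_pair n m)) x * indicator {0..1} x"

definition LA_P :: "nat \<Rightarrow> nat \<Rightarrow> real poly" where
  "LA_P n m = (THE P. degree P = n + m \<and> lead_coeff P = 1 \<and>
      (\<forall>k<n. (LBINT x=-1..0. poly P x * x ^ k) = 0) \<and>
      (\<forall>k<m. (LBINT x=0..1. poly P x * x ^ k) = 0))"

definition LA_a :: "nat \<Rightarrow> real" where
  "LA_a j = (THE a. LA_P j (j - 1) - LA_P (j - 1) j = smult a (LA_P (j - 1) (j - 1)))"

end

theory Submission
  imports Defs "Jordan_Normal_Form.Determinant"
begin

text \<open>
  On each half of \<open>[-1, 1]\<close> the wavelet \<open>f\<^sub>k\<close> is a polynomial of degree \<open>< n\<close>, and the symmetry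
  condition determines the left piece from the right one. For pairs of pieces of degrees \<open>< n\<close> and
  \<open>< m\<close> with \<open>|n - m| \<le> 1\<close>, the first \<open>n + m\<close> moments determine the pair: writing the moments in
  terms of the coefficients gives Cauchy-type systems \<open>\<Sum> c\<^sub>l / (l + z)\<close> at the nodes \<open>z = k + 1\<close>,
  which are non-singular. This yields existence and uniqueness of the type I functions \<open>Q\<^sub>n\<^sub>,\<^sub>m\<close> and
  of the type II polynomials \<open>P\<^sub>n\<^sub>,\<^sub>m\<close>.

  The moments of \<open>f\<^sub>k\<close> vanish below order \<open>k + n - 1\<close> and, by symmetry, at every order of the
  parity of \<open>k + n\<close>. The odd functions \<open>Q\<^sub>j\<^sub>,\<^sub>j\<close> have the same lacunary pattern starting at order
  \<open>2j - 1\<close>, and so do the combinations \<open>G\<^sub>j = Q\<^sub>j\<^sub>+\<^sub>1\<^sub>,\<^sub>j + (a\<^sub>j\<^sub>+\<^sub>1 / 2) Q\<^sub>j\<^sub>+\<^sub>1\<^sub>,\<^sub>j\<^sub>+\<^sub>1\<close> starting at order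
  \<open>2j\<close>: since \<open>Q\<^sub>j\<^sub>,\<^sub>j\<^sub>+\<^sub>1\<close> is the mirror image of \<open>Q\<^sub>j\<^sub>+\<^sub>1\<^sub>,\<^sub>j\<close> and
  \<open>Q\<^sub>j\<^sub>,\<^sub>j\<^sub>+\<^sub>1 - Q\<^sub>j\<^sub>+\<^sub>1\<^sub>,\<^sub>j = a\<^sub>j\<^sub>+\<^sub>1 Q\<^sub>j\<^sub>+\<^sub>1\<^sub>,\<^sub>j\<^sub>+\<^sub>1\<close> (the constant is identified with \<open>a\<^sub>j\<^sub>+\<^sub>1\<close> by
  pairing the corresponding relation between the \<open>P\<close>'s with \<open>Q\<^sub>j\<^sub>,\<^sub>j\<^sub>+\<^sub>1\<close>), the odd moments of \<open>G\<^sub>j\<close>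
  cancel. Eliminating the moments of \<open>f\<^sub>k\<close> order by order against these functions expands \<open>f\<^sub>k\<close>
  in them.
\<close>

lemma mat_det_nonzero_iff_inj:
  fixes G :: "nat \<Rightarrow> nat \<Rightarrow> real"
  shows "Determinant.det (Matrix.mat N N (\<lambda>(i, k). G i k)) \<noteq> 0
         \<longleftrightarrow> (\<forall>y. (\<forall>i<N. (\<Sum>k<N. G i k * y k) = 0) \<longrightarrow> (\<forall>k<N. y k = 0))"
proof -
  define M where "M = Matrix.mat N N (\<lambda>(i, k). G i k)"
  have M: "M \<in> carrier_mat N N" unfolding M_def by simp
  have Mv: "M *\<^sub>v v = 0\<^sub>v N \<longleftrightarrow> (\<forall>i<N. (\<Sum>k<N. G i k * vec_index v k) = 0)"
    if "v \<in> carrier_vec N" for v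
    using that unfolding M_def
    by (auto simp: vec_eq_iff mult_mat_vec_def scalar_prod_def lessThan_atLeast0 intro!: sum.cong)
  have "Determinant.det M = 0 \<longleftrightarrow> (\<exists>v. v \<in> carrier_vec N \<and> v \<noteq> 0\<^sub>v N \<and> M *\<^sub>v v = 0\<^sub>v N)"
    by (rule det_0_iff_vec_prod_zero[OF M])
  also have "\<dots> \<longleftrightarrow> (\<exists>y. (\<forall>i<N. (\<Sum>k<N. G i k * y k) = 0) \<and> \<not> (\<forall>k<N. y k = 0))"
  proof
    assume "\<exists>v. v \<in> carrier_vec N \<and> v \<noteq> 0\<^sub>v N \<and> M *\<^sub>v v = 0\<^sub>v N"
    then obtain v where "v \<in> carrier_vec N" "v \<noteq> 0\<^sub>v N" "M *\<^sub>v v = 0\<^sub>v N" by blast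
    thus "\<exists>y. (\<forall>i<N. (\<Sum>k<N. G i k * y k) = 0) \<and> \<not> (\<forall>k<N. y k = 0)"
      using Mv by (intro exI[of _ "vec_index v"]) (auto simp: vec_eq_iff)
  next
    assume "\<exists>y. (\<forall>i<N. (\<Sum>k<N. G i k * y k) = 0) \<and> \<not> (\<forall>k<N. y k = 0)"
    then obtain y where "\<forall>i<N. (\<Sum>k<N. G i k * y k) = 0" "\<not> (\<forall>k<N. y k = 0)" by blast
    thus "\<exists>v. v \<in> carrier_vec N \<and> v \<noteq> 0\<^sub>v N \<and> M *\<^sub>v v = 0\<^sub>v N"
      using Mv[of "Matrix.vec N y"] by (intro exI[of _ "Matrix.vec N y"]) (auto simp: vec_eq_iff)
  qed
  finally show ?thesis unfolding M_def by blast
qed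

lemma mat_det_nonzero_solvable:
  fixes G :: "nat \<Rightarrow> nat \<Rightarrow> real"
  assumes "Determinant.det (Matrix.mat N N (\<lambda>(i, k). G i k)) \<noteq> 0"
  shows "\<exists>y. \<forall>i<N. (\<Sum>k<N. G i k * y k) = b i"
proof -
  define M where "M = Matrix.mat N N (\<lambda>(i, k). G i k)"
  have M: "M \<in> carrier_mat N N" unfolding M_def by simp
  obtain M' where M': "M' \<in> carrier_mat N N" and MM': "M * M' = 1\<^sub>m N"
    using det_non_zero_imp_unit[OF M assms[folded M_def]] unfolding Units_def by (auto simp: ring_mat_def)
  define v where "v = M' *\<^sub>v Matrix.vec N b"
  have "M *\<^sub>v v = Matrix.vec N b"
    unfolding v_def using M M' MM' by (simp add: assoc_mult_mat_vec[symmetric])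
  moreover have "vec_index (M *\<^sub>v v) i = (\<Sum>k<N. G i k * vec_index v k)" if "i < N" for i
    using that M' unfolding M_def v_def
    by (auto simp: mult_mat_vec_def scalar_prod_def lessThan_atLeast0 intro!: sum.cong)
  ultimately show ?thesis by (metis index_vec)
qed

lemma square_system_solvable:
  fixes G :: "nat \<Rightarrow> nat \<Rightarrow> real"
  assumes inj: "\<And>x. \<forall>k<N. (\<Sum>i<N. x i * G i k) = 0 \<Longrightarrow> \<forall>i<N. x i = 0"
  shows "\<And>b. \<exists>x. \<forall>k<N. (\<Sum>i<N. x i * G i k) = b k"
    and "\<And>y. \<forall>i<N. (\<Sum>k<N. G i k * y k) = 0 \<Longrightarrow> \<forall>k<N. y k = 0"
    and "\<And>b. \<exists>y. \<forall>i<N. (\<Sum>k<N. G i k * y k) = b i"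
proof -
  have GT: "Determinant.det (Matrix.mat N N (\<lambda>(k, i). G i k)) \<noteq> 0"
    using inj unfolding mat_det_nonzero_iff_inj by (simp add: mult.commute)
  moreover have "Matrix.mat N N (\<lambda>(k, i). G i k) = transpose_mat (Matrix.mat N N (\<lambda>(i, k). G i k))"
    by auto
  ultimately have G: "Determinant.det (Matrix.mat N N (\<lambda>(i, k). G i k)) \<noteq> 0"
    using det_transpose[of "Matrix.mat N N (\<lambda>(i, k). G i k)" N] by simp
  show "\<exists>x. \<forall>k<N. (\<Sum>i<N. x i * G i k) = b k" for b
    using mat_det_nonzero_solvable[OF GT] by (simp add: mult.commute)
  show "\<forall>i<N. (\<Sum>k<N. G i k * y k) = 0 \<Longrightarrow> \<forall>k<N. y k = 0" for y
    using G unfolding mat_det_nonzero_iff_inj by blast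
  show "\<exists>y. \<forall>i<N. (\<Sum>k<N. G i k * y k) = b i" for b
    using mat_det_nonzero_solvable[OF G] .
qed

definition poly_integral :: "real \<Rightarrow> real \<Rightarrow> real poly \<Rightarrow> real" where
  "poly_integral a b p = (\<Sum>i\<le>degree p. coeff p i * (b ^ Suc i - a ^ Suc i) / Suc i)"

lemma poly_integral_lessThan:
  assumes "degree p < N"
  shows "poly_integral a b p = (\<Sum>i<N. coeff p i * (b ^ Suc i - a ^ Suc i) / Suc i)"
  unfolding poly_integral_def
  by (rule sum.mono_neutral_left) (use assms in \<open>auto simp: coeff_eq_0\<close>)

lemma interval_integral_poly:
  assumes "a \<le> b"
  shows "(LBINT x=a..b. poly p x) = poly_integral a b p"
proof -
  define F where "F x = (\<Sum>i\<le>degree p. coeff p i * x ^ Suc i / Suc i)" for x :: real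
  have F': "(F has_real_derivative poly p x) (at x within S)" for x S
  proof -
    have "((\<lambda>x. coeff p i * x ^ Suc i / Suc i) has_real_derivative coeff p i * x ^ i) (at x within S)" for i
      by (auto intro!: derivative_eq_intros simp del: power_Suc of_nat_Suc)
    hence "(F has_real_derivative (\<Sum>i\<le>degree p. coeff p i * x ^ i)) (at x within S)"
      unfolding F_def by (intro DERIV_sum)
    thus ?thesis by (simp add: poly_altdef)
  qed
  have "(LBINT x=a..b. poly p x) = F b - F a"
    by (rule interval_integral_FTC_finite)
      (auto intro: continuous_intros simp: has_real_derivative_iff_has_vector_derivative[symmetric] F')
  also have "\<dots> = poly_integral a b p" unfolding F_def poly_integral_def
    by (simp add: sum_subtractf[symmetric] diff_divide_distrib right_diff_distrib)
  finally show ?thesis .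
qed

lemma poly_integral_add: "poly_integral a b (p + q) = poly_integral a b p + poly_integral a b q"
proof -
  define N where "N = Suc (max (degree p) (degree q))"
  have "degree (p + q) < N" "degree p < N" "degree q < N"
    unfolding N_def using degree_add_le_max[of p q] by auto
  thus ?thesis
    by (simp add: poly_integral_lessThan sum.distrib[symmetric] add_divide_distrib distrib_right)
qed

lemma poly_integral_smult: "poly_integral a b (Polynomial.smult c p) = c * poly_integral a b p"
proof -
  have "degree (Polynomial.smult c p) < Suc (degree p)" "degree p < Suc (degree p)" by auto
  hence "poly_integral a b (Polynomial.smult c p)
        = (\<Sum>i<Suc (degree p). c * (coeff p i * (b ^ Suc i - a ^ Suc i) / Suc i))"
    "poly_integral a b p = (\<Sum>i<Suc (degree p). coeff p i * (b ^ Suc i - a ^ Suc i) / Suc i)"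
    by (simp_all only: poly_integral_lessThan coeff_smult mult.assoc times_divide_eq_right)
  thus ?thesis by (simp only: sum_distrib_left)
qed

lemma poly_integral_diff: "poly_integral a b (p - q) = poly_integral a b p - poly_integral a b q"
  using poly_integral_add[of a b p "-q"] poly_integral_smult[of a b "-1" q] by simp

lemma poly_integral_0 [simp]: "poly_integral a b 0 = 0"
  unfolding poly_integral_def by simp

lemma poly_integral_sum: "poly_integral a b (\<Sum>i\<in>S. p i) = (\<Sum>i\<in>S. poly_integral a b (p i))"
  by (induction S rule: infinite_finite_induct) (auto simp: poly_integral_add)

lemma poly_integral_monom: "poly_integral a b (monom c k) = c * (b ^ Suc k - a ^ Suc k) / Suc k"
proof -
  have "poly_integral a b (monom c k)
      = (\<Sum>i<Suc k. coeff (monom c k) i * (b ^ Suc i - a ^ Suc i) / Suc i)"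
    using degree_monom_le[of c k] by (intro poly_integral_lessThan) simp
  also have "\<dots> = c * (b ^ Suc k - a ^ Suc k) / Suc k"
    by (simp add: coeff_monom del: of_nat_Suc power_Suc)
  finally show ?thesis .
qed

lemma interval_integral_piecewise_poly:
  fixes h :: "real \<Rightarrow> real"
  assumes hA: "\<And>t. t \<in> {-1<..<0} \<Longrightarrow> h t = poly A t"
    and hB: "\<And>t. t \<in> {0<..<1} \<Longrightarrow> h t = poly B t"
  shows "(LBINT t=-1..1. h t) = poly_integral (-1) 0 A + poly_integral 0 1 B"
proof -
  have piece: "set_integrable lborel {a<..<b} h"
    if "\<And>t. t \<in> {a<..<b} \<Longrightarrow> h t = poly p t" for a b p
  proof -
    have "set_integrable lborel {a..b} (poly p)"
      by (rule borel_integrable_atLeastAtMost') (auto intro: continuous_intros)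
    hence "set_integrable lborel {a<..<b} (poly p)"
      by (rule set_integrable_subset) auto
    thus ?thesis using set_integrable_cong[of lborel lborel "{a<..<b}" "{a<..<b}" h "poly p"] that
      by simp
  qed
  have "(\<lambda>x. indicator {0::real} x *\<^sub>R h x) = (\<lambda>x. h 0 * indicator {0} x)"
    by (auto simp: indicator_def)
  hence "set_integrable lborel {0} h" unfolding set_integrable_def by simp
  hence "set_integrable lborel ({-1<..<0} \<union> {0} \<union> {0<..<1}) h"
    by (intro set_integrable_Un piece[OF hA] piece[OF hB]) auto
  moreover have "{-1<..<0} \<union> {0} \<union> {0<..<1} = {-1<..<(1::real)}" by auto
  ultimately have "set_integrable lborel {-1<..<1} h" by simp
  moreover have "einterval (-1) 1 = {-1<..<(1::real)}" by (auto simp: einterval_def one_ereal_def)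
  ultimately have "(LBINT t=-1..0. h t) + (LBINT t=0..1. h t) = (LBINT t=-1..1. h t)"
    by (intro interval_integral_sum)
      (auto simp: interval_lebesgue_integrable_def one_ereal_def min_def max_def)
  moreover have "(LBINT t=-1..0. h t) = (LBINT t=-1..0. poly A t)"
    by (rule interval_integral_cong) (use hA in \<open>auto simp: einterval_def one_ereal_def\<close>)
  moreover have "(LBINT t=0..1. h t) = (LBINT t=0..1. poly B t)"
    by (rule interval_integral_cong) (use hB in \<open>auto simp: einterval_def one_ereal_def\<close>)
  ultimately show ?thesis
    using interval_integral_poly[of "-1" 0 A] interval_integral_poly[of 0 1 B]
    by (simp add: one_ereal_def zero_ereal_def)
qed

definition deg_less :: "nat \<Rightarrow> 'a::zero poly \<Rightarrow> bool" where
  "deg_less n p \<longleftrightarrow> (\<forall>l\<ge>n. coeff p l = 0)"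

lemma deg_less_iff: "deg_less n p \<longleftrightarrow> (if n = 0 then p = 0 else degree p \<le> n - 1)"
  unfolding deg_less_def
  by (auto simp: poly_eq_iff coeff_eq_0 intro: degree_le)

lemma deg_less_Suc_degree: "deg_less (Suc (degree p)) p"
  unfolding deg_less_def by (simp add: coeff_eq_0)

lemma deg_less_SucD: "deg_less (Suc N) p \<Longrightarrow> coeff p N = 0 \<Longrightarrow> deg_less N p"
  unfolding deg_less_def by (metis le_antisym not_less_eq_eq)

lemma deg_less_sum_monom: "deg_less n p \<Longrightarrow> p = (\<Sum>l<n. monom (coeff p l) l)"
  unfolding deg_less_def by (auto simp: poly_eq_iff coeff_sum coeff_monom not_less)

lemma deg_less_coeffs_zero: "deg_less n p \<Longrightarrow> \<forall>l<n. coeff p l = 0 \<Longrightarrow> p = 0"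
  unfolding deg_less_def by (auto simp: poly_eq_iff not_less[symmetric])

lemma deg_less_0 [simp]: "deg_less n 0"
  unfolding deg_less_def by simp

lemma deg_less_add: "deg_less n p \<Longrightarrow> deg_less n q \<Longrightarrow> deg_less n (p + q)"
  unfolding deg_less_def by simp

lemma deg_less_diff: "deg_less n p \<Longrightarrow> deg_less n q \<Longrightarrow> deg_less n (p - q)"
  unfolding deg_less_def by simp

lemma deg_less_minus: "deg_less n p \<Longrightarrow> deg_less n (- p)"
  unfolding deg_less_def by simp

lemma deg_less_smult: "deg_less n p \<Longrightarrow> deg_less n (Polynomial.smult c p)"
  unfolding deg_less_def by simp

lemma deg_less_mono: "deg_less n p \<Longrightarrow> n \<le> n' \<Longrightarrow> deg_less n' p"
  unfolding deg_less_def by simp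

lemma deg_less_monom: "l < n \<Longrightarrow> deg_less n (monom c l)"
  unfolding deg_less_def by (auto simp: coeff_monom)

abbreviation mirror :: "'a::idom poly \<Rightarrow> 'a poly" where
  "mirror p \<equiv> p \<circ>\<^sub>p [:0, -1:]"

lemma poly_mirror: "poly (mirror p) x = poly p (- x)"
  by (simp add: poly_pcompose)

lemma mirror_mirror [simp]: "mirror (mirror p) = p"
  by (simp add: poly_eq_iff coeff_pcompose_linear power_mult_distrib[symmetric])

lemma deg_less_mirror: "deg_less n (mirror p) \<longleftrightarrow> deg_less n p"
  unfolding deg_less_def by (simp add: coeff_pcompose_linear)

definition pw_poly :: "real poly \<Rightarrow> real poly \<Rightarrow> real \<Rightarrow> real" where
  "pw_poly A B x = poly A x * indicator {-1..0} x + poly B x * indicator {0..1} x"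

definition pw_inner :: "real poly \<Rightarrow> real poly \<Rightarrow> real poly \<Rightarrow> real" where
  "pw_inner P A B = poly_integral (-1) 0 (P * A) + poly_integral 0 1 (P * B)"

definition pw_moment :: "real poly \<Rightarrow> real poly \<Rightarrow> nat \<Rightarrow> real" where
  "pw_moment A B k = pw_inner (monom 1 k) A B"

lemma pw_poly_left: "x \<in> {-1<..<0} \<Longrightarrow> pw_poly A B x = poly A x"
  and pw_poly_right: "x \<in> {0<..<1} \<Longrightarrow> pw_poly A B x = poly B x"
  unfolding pw_poly_def by (auto simp: indicator_def)

lemma pw_poly_add_smult:
  "pw_poly (A + Polynomial.smult c C) (B + Polynomial.smult c D) x = pw_poly A B x + c * pw_poly C D x"
  unfolding pw_poly_def by (simp add: algebra_simps)

lemma pw_poly_sum_smult: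
  "pw_poly (\<Sum>j\<in>S. Polynomial.smult (c j) (A j)) (\<Sum>j\<in>S. Polynomial.smult (c j) (B j)) x
   = (\<Sum>j\<in>S. c j * pw_poly (A j) (B j) x)"
  unfolding pw_poly_def by (simp add: poly_sum sum_distrib_right mult.assoc distrib_left sum.distrib)

lemma interval_integral_pw_moment: "(LBINT x=-1..1. pw_poly A B x * x ^ k) = pw_moment A B k"
  unfolding pw_moment_def pw_inner_def
  by (rule interval_integral_piecewise_poly) (auto simp: pw_poly_def indicator_def poly_monom)

lemma pw_inner_0 [simp]: "pw_inner 0 A B = 0" "pw_inner P 0 0 = 0"
  unfolding pw_inner_def by simp_all

lemma pw_inner_add2: "pw_inner P (A + C) (B + D) = pw_inner P A B + pw_inner P C D"
  unfolding pw_inner_def by (simp add: distrib_left poly_integral_add)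

lemma pw_inner_diff2: "pw_inner P (A - C) (B - D) = pw_inner P A B - pw_inner P C D"
  unfolding pw_inner_def by (simp add: right_diff_distrib poly_integral_diff)

lemma pw_inner_smult2:
  "pw_inner P (Polynomial.smult c A) (Polynomial.smult c B) = c * pw_inner P A B"
  unfolding pw_inner_def by (simp add: poly_integral_smult distrib_left)

lemma pw_inner_sum2:
  "pw_inner P (\<Sum>i\<in>S. A i) (\<Sum>i\<in>S. B i) = (\<Sum>i\<in>S. pw_inner P (A i) (B i))"
  by (induction S rule: infinite_finite_induct) (simp_all add: pw_inner_add2)

lemma pw_inner_add1: "pw_inner (P + Q) A B = pw_inner P A B + pw_inner Q A B"
  unfolding pw_inner_def by (simp add: distrib_right poly_integral_add)

lemma pw_inner_diff1: "pw_inner (P - Q) A B = pw_inner P A B - pw_inner Q A B"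
  unfolding pw_inner_def by (simp add: left_diff_distrib poly_integral_diff)

lemma pw_inner_smult1: "pw_inner (Polynomial.smult c P) A B = c * pw_inner P A B"
  unfolding pw_inner_def by (simp add: poly_integral_smult distrib_left)

lemma pw_inner_sum1: "pw_inner (\<Sum>i\<in>S. P i) A B = (\<Sum>i\<in>S. pw_inner (P i) A B)"
  by (induction S rule: infinite_finite_induct) (simp_all add: pw_inner_add1)

lemma pw_moment_add: "pw_moment (A + C) (B + D) k = pw_moment A B k + pw_moment C D k"
  unfolding pw_moment_def by (rule pw_inner_add2)

lemma pw_moment_diff: "pw_moment (A - C) (B - D) k = pw_moment A B k - pw_moment C D k"
  unfolding pw_moment_def by (rule pw_inner_diff2)

lemma pw_moment_smult:
  "pw_moment (Polynomial.smult c A) (Polynomial.smult c B) k = c * pw_moment A B k"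
  unfolding pw_moment_def by (rule pw_inner_smult2)

lemma pw_moment_minus: "pw_moment (- A) (- B) k = - pw_moment A B k"
  using pw_moment_smult[of "-1" A B k] by simp

lemma pw_moment_sum:
  "pw_moment (\<Sum>i\<in>S. A i) (\<Sum>i\<in>S. B i) k = (\<Sum>i\<in>S. pw_moment (A i) (B i) k)"
  unfolding pw_moment_def by (rule pw_inner_sum2)

lemma pw_inner_eq_sum_moments:
  assumes "degree P \<le> d"
  shows "pw_inner P A B = (\<Sum>k\<le>d. coeff P k * pw_moment A B k)"
proof -
  have "pw_inner P A B = pw_inner (\<Sum>k\<le>d. Polynomial.smult (coeff P k) (monom 1 k)) A B"
    using poly_as_sum_of_monoms'[OF assms] by (simp add: smult_monom)
  thus ?thesis by (simp add: pw_inner_sum1 pw_inner_smult1 pw_moment_def)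
qed

lemma pw_inner_eq_top_moment:
  assumes "degree P \<le> d" "\<And>k. k < d \<Longrightarrow> pw_moment A B k = 0"
  shows "pw_inner P A B = coeff P d * pw_moment A B d"
  using assms by (simp add: pw_inner_eq_sum_moments lessThan_Suc_atMost[symmetric])

lemma pw_moment_explicit:
  assumes A: "deg_less n A" and B: "deg_less m B"
  shows "pw_moment A B k = (\<Sum>l<n. coeff A l * (-1)^(l+k) / (real l + real k + 1))
                          + (\<Sum>l<m. coeff B l / (real l + real k + 1))"
proof -
  have A': "monom 1 k * A = (\<Sum>l<n. monom (coeff A l) (l + k))"
    by (subst deg_less_sum_monom[OF A]) (simp add: sum_distrib_left mult_monom add.commute)
  have B': "monom 1 k * B = (\<Sum>l<m. monom (coeff B l) (l + k))"
    by (subst deg_less_sum_monom[OF B]) (simp add: sum_distrib_left mult_monom add.commute)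
  show ?thesis
    unfolding pw_moment_def pw_inner_def A' B' poly_integral_sum poly_integral_monom
    by (simp add: power_add add_ac)
qed

lemma pw_moment_mirror: "pw_moment (mirror B) (mirror A) k = (-1)^k * pw_moment A B k"
proof -
  define n where "n = Suc (max (degree A) (degree B))"
  have A: "deg_less n A" and B: "deg_less n B"
    unfolding n_def by (auto intro: deg_less_mono[OF deg_less_Suc_degree])
  have A': "deg_less n (mirror A)" and B': "deg_less n (mirror B)"
    using A B by (simp_all add: deg_less_mirror)
  show ?thesis
    unfolding pw_moment_explicit[OF A B] pw_moment_explicit[OF B' A'] coeff_pcompose_linear
    by (simp add: distrib_left sum_distrib_left power_add mult_ac add.commute)
qed

section \<open>Non-degeneracy of the moment map\<close>

definition shift_prod :: "nat \<Rightarrow> nat \<Rightarrow> real poly" where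
  "shift_prod N l = (\<Prod>i\<in>{..<N}-{l}. [:real i, 1:])"

lemma poly_shift_prod: "poly (shift_prod N l) z = (\<Prod>i\<in>{..<N}-{l}. z + real i)"
  unfolding shift_prod_def by (simp add: poly_prod add.commute)

lemma degree_shift_prod: "l < N \<Longrightarrow> degree (shift_prod N l) \<le> N - 1"
proof -
  assume l: "l < N"
  have "degree (shift_prod N l) \<le> sum (degree \<circ> (\<lambda>i. [:real i, 1:])) ({..<N}-{l})"
    unfolding shift_prod_def by (rule degree_prod_sum_le) auto
  also have "\<dots> = N - 1" using l by simp
  finally show ?thesis .
qed

lemma poly_shift_prod_times:
  "l < N \<Longrightarrow> (z + real l) * poly (shift_prod N l) z = (\<Prod>i<N. z + real i)"
  unfolding poly_shift_prod by (simp add: prod.remove[of "{..<N}" l])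

lemma poly_shift_prod_neg:
  assumes "l < N"
  shows "poly (shift_prod N l') (- real l) = (if l' = l then (\<Prod>i\<in>{..<N}-{l}. real i - real l) else 0)"
proof (cases "l' = l")
  case False
  hence "l \<in> {..<N}-{l'}" using assms by auto
  hence "(\<Prod>i\<in>{..<N}-{l'}. - real l + real i) = 0" by (intro prod_zero) auto
  thus ?thesis using False by (simp add: poly_shift_prod)
qed (simp add: poly_shift_prod)

text \<open>A Cauchy matrix \<open>1 / (l + z\<^sub>j)\<close> with distinct positive nodes \<open>z\<^sub>j\<close> is non-singular: clearing
  denominators turns the rational function \<open>\<Sum> c\<^sub>l / (l + z)\<close> into a polynomial of degree \<open>< N\<close>
  with \<open>N\<close> roots, and its values at \<open>z = -l\<close> recover the \<open>c\<^sub>l\<close>.\<close>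
lemma partial_fractions_vanish_imp_zero:
  fixes c z :: "nat \<Rightarrow> real"
  assumes inj: "inj_on z {..<N}" and pos: "\<And>j. j < N \<Longrightarrow> z j > 0"
    and vanish: "\<And>j. j < N \<Longrightarrow> (\<Sum>l<N. c l / (real l + z j)) = 0"
  shows "\<forall>l<N. c l = 0"
proof -
  define q where "q = (\<Sum>l<N. Polynomial.smult (c l) (shift_prod N l))"
  have "poly q (z j) = 0" if j: "j < N" for j
  proof -
    have "c l / (real l + z j) * (\<Prod>i<N. z j + real i) = c l * poly (shift_prod N l) (z j)"
      if "l < N" for l
      using pos[OF j] poly_shift_prod_times[OF that, of "z j", symmetric] by (simp add: field_simps)
    hence "poly q (z j) = (\<Sum>l<N. c l / (real l + z j)) * (\<Prod>i<N. z j + real i)"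
      unfolding q_def by (simp add: poly_sum sum_distrib_right)
    thus ?thesis using vanish[OF j] by simp
  qed
  moreover have "degree q \<le> N - 1" unfolding q_def
  proof (intro degree_sum_le)
    fix l assume "l \<in> {..<N}"
    thus "degree (Polynomial.smult (c l) (shift_prod N l)) \<le> N - 1"
      using degree_shift_prod[of l N] degree_smult_le[of "c l" "shift_prod N l"] by simp
  qed simp
  ultimately have q0: "q = 0"
    using inj by (cases "N = 0") (auto simp: q_def card_image intro!: poly_eqI_degree[of "z ` {..<N}"])
  show ?thesis
  proof (intro allI impI)
    fix l assume l: "l < N"
    have "0 = poly q (- real l)" using q0 by simp
    also have "\<dots> = c l * (\<Prod>i\<in>{..<N}-{l}. real i - real l)"
      unfolding q_def poly_sum poly_smult using l
      by (simp add: poly_shift_prod_neg if_distrib[where f="\<lambda>x. _ * x"] cong: if_cong)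
    finally show "c l = 0" by (simp add: prod_zero_iff)
  qed
qed

text \<open>Moment \<open>k\<close> of the pair with coefficients \<open>(-1)\<^sup>l \<alpha>\<^sub>l\<close> and \<open>\<beta>\<^sub>l\<close> is
  \<open>\<Sum> \<beta>\<^sub>l / (l + k + 1) + (-1)\<^sup>k \<Sum> \<alpha>\<^sub>l / (l + k + 1)\<close>. The even moments test \<open>\<alpha> + \<beta>\<close> at the odd nodes \<open>1, 3, 5, \<dots>\<close> and the odd moments test
  \<open>\<beta> - \<alpha>\<close> at the even nodes \<open>2, 4, \<dots>\<close>; the hypothesis on \<open>n, m\<close> makes both node counts suffice.\<close>
lemma moment_equations_trivial:
  fixes \<alpha> \<beta> :: "nat \<Rightarrow> real"
  assumes nm: "n = m \<or> n = Suc m"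
    and h: "\<And>k. k < n + m \<Longrightarrow>
      (\<Sum>l<m. \<beta> l / (real l + real k + 1)) + (-1)^k * (\<Sum>l<n. \<alpha> l / (real l + real k + 1)) = 0"
  shows "(\<forall>l<n. \<alpha> l = 0) \<and> (\<forall>l<m. \<beta> l = 0)"
proof -
  define \<beta>' where "\<beta>' l = (if l < m then \<beta> l else 0)" for l
  have \<beta>'_sum: "(\<Sum>l<m. \<beta> l / x l) = (\<Sum>l<n. \<beta>' l / x l)" for x :: "nat \<Rightarrow> real"
    using nm by (auto simp: \<beta>'_def)
  have "\<forall>l<n. \<beta>' l + \<alpha> l = 0"
  proof (rule partial_fractions_vanish_imp_zero[where z="\<lambda>j. real (2*j) + 1"])
    fix j assume j: "j < n"
    have "(\<Sum>l<m. \<beta> l / (real l + real (2*j) + 1)) + (\<Sum>l<n. \<alpha> l / (real l + real (2*j) + 1)) = 0"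
      using h[of "2*j"] j nm by auto
    thus "(\<Sum>l<n. (\<beta>' l + \<alpha> l) / (real l + (real (2*j) + 1))) = 0"
      by (simp add: \<beta>'_sum add_divide_distrib sum.distrib add.assoc)
  qed (auto simp: inj_on_def)
  hence \<alpha>: "\<alpha> l = - \<beta>' l" if "l < n" for l using that by (simp add: eq_neg_iff_add_eq_0 add.commute)
  have "\<forall>l<m. \<beta> l = 0"
  proof (rule partial_fractions_vanish_imp_zero[where z="\<lambda>j. real (2*j) + 2"])
    fix j assume j: "j < m"
    have "(\<Sum>l<m. \<beta> l / (real l + real (2*j+1) + 1)) - (\<Sum>l<n. \<alpha> l / (real l + real (2*j+1) + 1)) = 0"
      using h[of "2*j+1"] j nm by auto
    hence "2 * (\<Sum>l<m. \<beta> l / (real l + real (2*j+1) + 1)) = 0"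
      by (simp add: \<alpha> \<beta>'_sum sum_negf)
    thus "(\<Sum>l<m. \<beta> l / (real l + (real (2*j) + 2))) = 0"
      by (simp add: add_ac)
  qed (auto simp: inj_on_def)
  moreover from this \<alpha> have "\<forall>l<n. \<alpha> l = 0" by (simp add: \<beta>'_def)
  ultimately show ?thesis by blast
qed

definition near_diagonal :: "nat \<Rightarrow> nat \<Rightarrow> bool" where
  "near_diagonal n m \<longleftrightarrow> n = m \<or> n = Suc m \<or> m = Suc n"

lemma near_diagonal_simps [simp]:
  "near_diagonal j j" "near_diagonal (Suc j) j" "near_diagonal j (Suc j)"
  unfolding near_diagonal_def by auto

lemma pw_moments_zero_imp_zero:
  assumes nd: "near_diagonal n m" and A: "deg_less n A" and B: "deg_less m B"
    and h: "\<And>k. k < n + m \<Longrightarrow> pw_moment A B k = 0"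
  shows "A = 0 \<and> B = 0"
proof -
  define \<alpha> where "\<alpha> l = (-1)^l * coeff A l" for l
  define \<beta> where "\<beta> l = coeff B l" for l
  have eq: "(\<Sum>l<m. \<beta> l / (real l + real k + 1)) + (-1)^k * (\<Sum>l<n. \<alpha> l / (real l + real k + 1)) = 0"
    if "k < n + m" for k
    using h[OF that] unfolding pw_moment_explicit[OF A B] \<alpha>_def \<beta>_def
    by (simp add: sum_distrib_left power_add mult_ac add.commute)
  have "(\<forall>l<n. \<alpha> l = 0) \<and> (\<forall>l<m. \<beta> l = 0)"
  proof (cases "m = Suc n")
    case False
    thus ?thesis using nd[unfolded near_diagonal_def] moment_equations_trivial[of n m \<beta> \<alpha>] eq by blast
  next
    case True
    have "(\<Sum>l<n. \<alpha> l / (real l + real k + 1)) + (-1)^k * (\<Sum>l<m. \<beta> l / (real l + real k + 1)) = 0"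
      if "k < m + n" for k
      using arg_cong[OF eq[of k], of "(*) ((-1)^k)"] that
      by (simp add: distrib_left mult.assoc[symmetric] power_add[symmetric] add.commute)
    thus ?thesis using moment_equations_trivial[of m n \<alpha> \<beta>] True by blast
  qed
  thus ?thesis using deg_less_coeffs_zero A B by (auto simp: \<alpha>_def \<beta>_def)
qed

definition basis_A :: "nat \<Rightarrow> nat \<Rightarrow> real poly" where
  "basis_A n i = (if i < n then monom 1 i else 0)"

definition basis_B :: "nat \<Rightarrow> nat \<Rightarrow> real poly" where
  "basis_B n i = (if i < n then 0 else monom 1 (i - n))"

definition gram :: "nat \<Rightarrow> nat \<Rightarrow> nat \<Rightarrow> real" where
  "gram n i k = pw_moment (basis_A n i) (basis_B n i) k"

definition comb_A :: "nat \<Rightarrow> nat \<Rightarrow> (nat \<Rightarrow> real) \<Rightarrow> real poly" where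
  "comb_A n m x = (\<Sum>i<n+m. Polynomial.smult (x i) (basis_A n i))"

definition comb_B :: "nat \<Rightarrow> nat \<Rightarrow> (nat \<Rightarrow> real) \<Rightarrow> real poly" where
  "comb_B n m x = (\<Sum>i<n+m. Polynomial.smult (x i) (basis_B n i))"

lemma pw_moment_comb: "pw_moment (comb_A n m x) (comb_B n m x) k = (\<Sum>i<n+m. x i * gram n i k)"
  unfolding comb_A_def comb_B_def gram_def pw_moment_sum pw_moment_smult ..

lemma pw_inner_comb:
  "pw_inner P (comb_A n m x) (comb_B n m x) = (\<Sum>i<n+m. x i * pw_inner P (basis_A n i) (basis_B n i))"
  unfolding comb_A_def comb_B_def pw_inner_sum2 pw_inner_smult2 ..

lemma coeff_comb_A: "coeff (comb_A n m x) l = (if l < n then x l else 0)"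
proof -
  have "coeff (comb_A n m x) l = (\<Sum>i<n+m. if i = l then (if l < n then x l else 0) else 0)"
    unfolding comb_A_def basis_A_def coeff_sum by (intro sum.cong) (auto simp: coeff_monom)
  thus ?thesis by simp
qed

lemma coeff_comb_B: "coeff (comb_B n m x) l = (if l < m then x (n + l) else 0)"
proof -
  have "coeff (comb_B n m x) l = (\<Sum>i<n+m. if i = n + l then (if l < m then x (n + l) else 0) else 0)"
    unfolding comb_B_def basis_B_def coeff_sum by (intro sum.cong) (auto simp: coeff_monom)
  thus ?thesis by simp
qed

lemma deg_less_comb: "deg_less n (comb_A n m x)" "deg_less m (comb_B n m x)"
  unfolding deg_less_def by (simp_all add: coeff_comb_A coeff_comb_B)

lemma comb_coeffs:
  assumes A: "deg_less n A" and B: "deg_less m B"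
  defines "x \<equiv> \<lambda>i. if i < n then coeff A i else coeff B (i - n)"
  shows "comb_A n m x = A" "comb_B n m x = B"
proof (rule_tac [!] poly_eqI)
  show "coeff (comb_A n m x) l = coeff A l" for l
    using A by (cases "l < n") (simp_all add: coeff_comb_A x_def deg_less_def)
  show "coeff (comb_B n m x) l = coeff B l" for l
    using B by (cases "l < m") (simp_all add: coeff_comb_B x_def deg_less_def)
qed

lemma gram_injective:
  assumes "near_diagonal n m" "\<forall>k<n+m. (\<Sum>i<n+m. x i * gram n i k) = 0"
  shows "\<forall>i<n+m. x i = 0"
proof -
  have "comb_A n m x = 0 \<and> comb_B n m x = 0"
    using assms(2) by (intro pw_moments_zero_imp_zero[OF assms(1) deg_less_comb]) (simp add: pw_moment_comb)
  hence z: "comb_A n m x = 0" "comb_B n m x = 0" by simp_all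
  show ?thesis
  proof (intro allI impI)
    fix i assume i: "i < n + m"
    show "x i = 0"
    proof (cases "i < n")
      case True thus ?thesis using z coeff_comb_A[of n m x i] by simp
    next
      case False
      hence "i - n < m" "n + (i - n) = i" using i by auto
      thus ?thesis using z coeff_comb_B[of n m x "i - n"] by simp
    qed
  qed
qed

lemmas gram_solvable = square_system_solvable[where N="n+m" and G="gram n", OF gram_injective] for n m

section \<open>Type I Legendre--Angelesco functions\<close>

lemma typeI_cond_iff: "typeI_cond n m A B \<longleftrightarrow>
   deg_less n A \<and> deg_less m B \<and> (\<forall>k. k + 2 \<le> n + m \<longrightarrow> pw_moment A B k = 0)
   \<and> pw_moment A B (n + m - 1) = 1"
  unfolding typeI_cond_def interval_integral_pw_moment[unfolded pw_poly_def] deg_less_iff ..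

lemma typeI_ex1:
  assumes nd: "near_diagonal n m" and N: "1 \<le> n + m"
  shows "\<exists>!AB. typeI_cond n m (fst AB) (snd AB)"
proof -
  obtain x where "\<forall>k<n+m. (\<Sum>i<n+m. x i * gram n i k) = (if k = n + m - 1 then 1 else 0)"
    using gram_solvable(1)[OF nd, where b="\<lambda>k. if k = n + m - 1 then 1 else 0"] by auto
  hence mom: "pw_moment (comb_A n m x) (comb_B n m x) k = (if k = n + m - 1 then 1 else 0)"
    if "k < n + m" for k
    using that by (simp add: pw_moment_comb)
  have ex: "typeI_cond n m (comb_A n m x) (comb_B n m x)"
    unfolding typeI_cond_iff
  proof (intro conjI allI impI deg_less_comb)
    show "pw_moment (comb_A n m x) (comb_B n m x) k = 0" if "k + 2 \<le> n + m" for k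
      using mom[of k] that by simp
    show "pw_moment (comb_A n m x) (comb_B n m x) (n + m - 1) = 1"
      using mom[of "n + m - 1"] N by simp
  qed
  show ?thesis
  proof (rule ex1I[of _ "(comb_A n m x, comb_B n m x)"])
    fix AB assume h: "typeI_cond n m (fst AB) (snd AB)"
    have "pw_moment (fst AB - comb_A n m x) (snd AB - comb_B n m x) k = 0" if "k < n + m" for k
    proof (cases "k = n + m - 1")
      case False
      hence "k + 2 \<le> n + m" using that by simp
      thus ?thesis using h ex unfolding typeI_cond_iff pw_moment_diff by simp
    qed (use h ex in \<open>simp add: typeI_cond_iff pw_moment_diff\<close>)
    moreover have "deg_less n (fst AB - comb_A n m x)" "deg_less m (snd AB - comb_B n m x)"
      using h ex unfolding typeI_cond_iff by (simp_all add: deg_less_diff)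
    ultimately have "fst AB - comb_A n m x = 0 \<and> snd AB - comb_B n m x = 0"
      by (intro pw_moments_zero_imp_zero[OF nd])
    thus "AB = (comb_A n m x, comb_B n m x)" by (cases AB) simp
  qed (use ex in simp)
qed

definition LA_A :: "nat \<Rightarrow> nat \<Rightarrow> real poly" where
  "LA_A n m = fst (typeI_pair n m)"

definition LA_B :: "nat \<Rightarrow> nat \<Rightarrow> real poly" where
  "LA_B n m = snd (typeI_pair n m)"

lemma LA_Q_eq_pw_poly: "LA_Q n m = pw_poly (LA_A n m) (LA_B n m)"
  unfolding LA_Q_def pw_poly_def LA_A_def LA_B_def ..

lemma typeI_cond_LA: "near_diagonal n m \<Longrightarrow> 1 \<le> n + m \<Longrightarrow> typeI_cond n m (LA_A n m) (LA_B n m)"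
  unfolding typeI_pair_def LA_A_def LA_B_def by (rule theI'[OF typeI_ex1])

lemma typeI_cond_imp_LA:
  assumes "near_diagonal n m" "1 \<le> n + m" "typeI_cond n m A B"
  shows "LA_A n m = A" "LA_B n m = B"
proof -
  have "typeI_pair n m = (A, B)"
    unfolding typeI_pair_def using assms by (intro the1_equality[OF typeI_ex1]) auto
  thus "LA_A n m = A" "LA_B n m = B" unfolding LA_A_def LA_B_def by simp_all
qed

lemma LA_props:
  assumes "near_diagonal n m" "1 \<le> n + m"
  shows "deg_less n (LA_A n m)" "deg_less m (LA_B n m)"
    "\<And>k. k + 2 \<le> n + m \<Longrightarrow> pw_moment (LA_A n m) (LA_B n m) k = 0"
    "pw_moment (LA_A n m) (LA_B n m) (n + m - 1) = 1"
  using typeI_cond_LA[OF assms] unfolding typeI_cond_iff by auto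

section \<open>Type II Legendre--Angelesco polynomials\<close>

definition pw_orth :: "nat \<Rightarrow> nat \<Rightarrow> real poly \<Rightarrow> bool" where
  "pw_orth n m P \<longleftrightarrow> (\<forall>A B. deg_less n A \<longrightarrow> deg_less m B \<longrightarrow> pw_inner P A B = 0)"

lemma pw_orth_iff_basis: "pw_orth n m P \<longleftrightarrow> (\<forall>i<n+m. pw_inner P (basis_A n i) (basis_B n i) = 0)"
proof
  assume "pw_orth n m P"
  moreover have "deg_less n (basis_A n i)" "deg_less m (basis_B n i)" if "i < n + m" for i
    using that by (auto simp: basis_A_def basis_B_def intro: deg_less_monom)
  ultimately show "\<forall>i<n+m. pw_inner P (basis_A n i) (basis_B n i) = 0"
    unfolding pw_orth_def by blast
next
  assume h: "\<forall>i<n+m. pw_inner P (basis_A n i) (basis_B n i) = 0"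
  show "pw_orth n m P" unfolding pw_orth_def
  proof (intro allI impI)
    fix A B :: "real poly" assume A: "deg_less n A" and B: "deg_less m B"
    define x where "x = (\<lambda>i. if i < n then coeff A i else coeff B (i - n))"
    have "pw_inner P A B = pw_inner P (comb_A n m x) (comb_B n m x)"
      using comb_coeffs(1)[OF A B] comb_coeffs(2)[OF A B] unfolding x_def by simp
    also have "\<dots> = 0" unfolding pw_inner_comb using h by simp
    finally show "pw_inner P A B = 0" .
  qed
qed

lemma pw_inner_basis:
  "pw_inner P (basis_A n i) (basis_B n i)
   = (if i < n then (LBINT x=-1..0. poly P x * x ^ i) else (LBINT x=0..1. poly P x * x ^ (i - n)))"
  using interval_integral_poly[of "-1" 0 "P * monom 1 i"] interval_integral_poly[of 0 1 "P * monom 1 (i - n)"]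
  by (simp add: pw_inner_def basis_A_def basis_B_def poly_monom one_ereal_def zero_ereal_def)

lemma LA_P_cond_iff_pw_orth:
  "(\<forall>k<n. (LBINT x=-1..0. poly P x * x ^ k) = 0) \<and> (\<forall>k<m. (LBINT x=0..1. poly P x * x ^ k) = 0)
   \<longleftrightarrow> pw_orth n m P" (is "?lower \<and> ?upper \<longleftrightarrow> _")
  unfolding pw_orth_iff_basis
proof
  assume "?lower \<and> ?upper"
  thus "\<forall>i<n+m. pw_inner P (basis_A n i) (basis_B n i) = 0"
    by (auto simp: pw_inner_basis)
next
  assume h: "\<forall>i<n+m. pw_inner P (basis_A n i) (basis_B n i) = 0"
  have ?lower
  proof (intro allI impI)
    fix k assume "k < n"
    thus "(LBINT x=-1..0. poly P x * x ^ k) = 0" using h[rule_format, of k] by (simp add: pw_inner_basis)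
  qed
  moreover have ?upper
  proof (intro allI impI)
    fix k assume "k < m"
    thus "(LBINT x=0..1. poly P x * x ^ k) = 0" using h[rule_format, of "n + k"] by (simp add: pw_inner_basis)
  qed
  ultimately show "?lower \<and> ?upper" ..
qed

lemma pw_orth_mono: "pw_orth n m P \<Longrightarrow> n' \<le> n \<Longrightarrow> m' \<le> m \<Longrightarrow> pw_orth n' m' P"
  unfolding pw_orth_def by (blast intro: deg_less_mono)

lemma pw_orth_diff: "pw_orth n m P \<Longrightarrow> pw_orth n m Q \<Longrightarrow> pw_orth n m (P - Q)"
  unfolding pw_orth_def by (simp add: pw_inner_diff1)

lemma pw_orth_imp_zero:
  assumes nd: "near_diagonal n m" and R: "deg_less (n+m) R" and orth: "pw_orth n m R"
  shows "R = 0"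
proof -
  have "(\<Sum>k<n+m. gram n i k * coeff R k) = 0" if i: "i < n + m" for i
  proof -
    have "degree R \<le> n + m" using R by (auto simp: deg_less_iff split: if_splits)
    hence "pw_inner R (basis_A n i) (basis_B n i) = (\<Sum>k\<le>n+m. coeff R k * gram n i k)"
      unfolding gram_def by (rule pw_inner_eq_sum_moments)
    also have "\<dots> = (\<Sum>k<n+m. gram n i k * coeff R k)"
      using R by (simp add: lessThan_Suc_atMost[symmetric] deg_less_def mult.commute)
    finally show ?thesis using orth i unfolding pw_orth_iff_basis by simp
  qed
  hence "\<forall>k<n+m. coeff R k = 0" using gram_solvable(2)[OF nd, of "coeff R"] by blast
  thus ?thesis using R deg_less_coeffs_zero by blast
qed

lemma deg_less_diff_monic:
  assumes "degree P = N" "lead_coeff P = 1" "degree Q = N" "lead_coeff Q = 1"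
  shows "deg_less N (P - Q)"
  unfolding deg_less_def
proof (intro allI impI)
  fix l assume "N \<le> l"
  thus "coeff (P - Q) l = 0" using assms by (cases "l = N") (simp_all add: coeff_eq_0)
qed

lemma typeII_ex1:
  assumes nd: "near_diagonal n m"
  shows "\<exists>!P. degree P = n + m \<and> lead_coeff P = 1 \<and> pw_orth n m P"
proof -
  define N where "N = n + m"
  obtain y where y: "\<forall>i<N. (\<Sum>k<N. gram n i k * y k) = - gram n i N"
    using gram_solvable(3)[OF nd, where b="\<lambda>i. - gram n i (n + m)"] unfolding N_def by auto
  define P where "P = monom 1 N + (\<Sum>k<N. monom (y k) k)"
  have cP: "coeff P k = (if k = N then 1 else if k < N then y k else 0)" for k
    unfolding P_def by (auto simp: coeff_sum coeff_monom)
  have dP: "degree P = N"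
    by (intro antisym degree_le le_degree) (simp_all add: cP)
  have "pw_orth n m P" unfolding pw_orth_iff_basis
  proof (intro allI impI)
    fix i assume i: "i < n + m"
    have "pw_inner P (basis_A n i) (basis_B n i) = (\<Sum>k\<le>N. coeff P k * gram n i k)"
      unfolding gram_def by (rule pw_inner_eq_sum_moments) (simp add: dP)
    also have "\<dots> = (\<Sum>k<N. gram n i k * y k) + gram n i N"
      by (simp add: lessThan_Suc_atMost[symmetric] cP mult.commute)
    also have "\<dots> = 0" using y i unfolding N_def by simp
    finally show "pw_inner P (basis_A n i) (basis_B n i) = 0" .
  qed
  moreover have "lead_coeff P = 1" using dP cP by simp
  ultimately have P: "degree P = n + m \<and> lead_coeff P = 1 \<and> pw_orth n m P"
    using dP N_def by simp
  show ?thesis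
  proof (rule ex1I[of _ P])
    fix Q assume Q: "degree Q = n + m \<and> lead_coeff Q = 1 \<and> pw_orth n m Q"
    have "Q - P = 0"
      using P Q by (intro pw_orth_imp_zero[OF nd] deg_less_diff_monic pw_orth_diff) auto
    thus "Q = P" by simp
  qed (rule P)
qed

lemma LA_P_props:
  assumes "near_diagonal n m"
  shows "degree (LA_P n m) = n + m \<and> lead_coeff (LA_P n m) = 1 \<and> pw_orth n m (LA_P n m)"
proof -
  have "LA_P n m = (THE P. degree P = n + m \<and> lead_coeff P = 1 \<and> pw_orth n m P)"
    unfolding LA_P_def LA_P_cond_iff_pw_orth[symmetric] by (simp only: conj_assoc)
  show ?thesis unfolding \<open>LA_P n m = _\<close> by (rule theI'[OF typeII_ex1[OF assms]])
qed

section \<open>Symmetries and the three-term relation\<close>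

lemma pw_moment_parity:
  assumes "mirror B = Polynomial.smult e A" "mirror A = Polynomial.smult e B"
  shows "e * pw_moment A B k = (-1)^k * pw_moment A B k"
  using pw_moment_mirror[of B A k] unfolding assms pw_moment_smult .

lemma LA_diag_odd:
  assumes "1 \<le> j"
  shows "LA_A j j = - mirror (LA_B j j)" "LA_B j j = - mirror (LA_A j j)"
proof -
  have j: "1 \<le> j + j" using assms by simp
  note P = LA_props[OF near_diagonal_simps(1) j]
  have m: "pw_moment (- mirror (LA_B j j)) (- mirror (LA_A j j)) k
           = - ((-1)^k * pw_moment (LA_A j j) (LA_B j j) k)" for k
    using pw_moment_mirror[of "LA_B j j" "LA_A j j" k] by (simp add: pcompose_uminus pw_moment_minus)
  have "typeI_cond j j (- mirror (LA_B j j)) (- mirror (LA_A j j))"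
    unfolding typeI_cond_iff
  proof (intro conjI allI impI)
    show "deg_less j (- mirror (LA_B j j))" "deg_less j (- mirror (LA_A j j))"
      using P(1,2) by (simp_all add: deg_less_minus deg_less_mirror)
    show "pw_moment (- mirror (LA_B j j)) (- mirror (LA_A j j)) k = 0" if "k + 2 \<le> j + j" for k
      unfolding m using P(3)[OF that] by simp
    have "odd (j + j - 1)" using assms by simp
    thus "pw_moment (- mirror (LA_B j j)) (- mirror (LA_A j j)) (j + j - 1) = 1"
      unfolding m using P(4) by simp
  qed
  from typeI_cond_imp_LA[OF near_diagonal_simps(1) j this]
  show "LA_A j j = - mirror (LA_B j j)" "LA_B j j = - mirror (LA_A j j)" by simp_all
qed

lemma LA_diag_even_moment:
  assumes "1 \<le> j" "even k"
  shows "pw_moment (LA_A j j) (LA_B j j) k = 0"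
proof -
  have "(-1) * pw_moment (LA_A j j) (LA_B j j) k = (-1)^k * pw_moment (LA_A j j) (LA_B j j) k"
    using LA_diag_odd[OF assms(1)] by (intro pw_moment_parity) (simp_all add: pcompose_uminus)
  thus ?thesis using assms(2) by simp
qed

lemma LA_swap_mirror: "LA_A j (Suc j) = mirror (LA_B (Suc j) j)" "LA_B j (Suc j) = mirror (LA_A (Suc j) j)"
proof -
  have j: "1 \<le> Suc j + j" "1 \<le> j + Suc j" by simp_all
  note P = LA_props[OF near_diagonal_simps(2) j(1)]
  have m: "pw_moment (mirror (LA_B (Suc j) j)) (mirror (LA_A (Suc j) j)) k
           = (-1)^k * pw_moment (LA_A (Suc j) j) (LA_B (Suc j) j) k" for k
    by (rule pw_moment_mirror)
  have "typeI_cond j (Suc j) (mirror (LA_B (Suc j) j)) (mirror (LA_A (Suc j) j))"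
    unfolding typeI_cond_iff
  proof (intro conjI allI impI)
    show "deg_less j (mirror (LA_B (Suc j) j))" "deg_less (Suc j) (mirror (LA_A (Suc j) j))"
      using P(1,2) by (simp_all add: deg_less_mirror)
    show "pw_moment (mirror (LA_B (Suc j) j)) (mirror (LA_A (Suc j) j)) k = 0" if "k + 2 \<le> j + Suc j" for k
      unfolding m using P(3) that by simp
    show "pw_moment (mirror (LA_B (Suc j) j)) (mirror (LA_A (Suc j) j)) (j + Suc j - 1) = 1"
      unfolding m using P(4) by simp
  qed
  from typeI_cond_imp_LA[OF near_diagonal_simps(3) j(2) this]
  show "LA_A j (Suc j) = mirror (LA_B (Suc j) j)" "LA_B j (Suc j) = mirror (LA_A (Suc j) j)" by simp_all
qed

text \<open>\<open>Q\<^sub>j\<^sub>,\<^sub>j\<^sub>+\<^sub>1 - Q\<^sub>j\<^sub>+\<^sub>1\<^sub>,\<^sub>j\<close> has vanishing moments up to order \<open>2j\<close>, so it is a multiple of \<open>Q\<^sub>j\<^sub>+\<^sub>1\<^sub>,\<^sub>j\<^sub>+\<^sub>1\<close>;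
  its factor is read off from the next moment.\<close>
definition LA_c :: "nat \<Rightarrow> real" where
  "LA_c j = pw_moment (LA_A j (Suc j) - LA_A (Suc j) j) (LA_B j (Suc j) - LA_B (Suc j) j) (2*j+1)"

lemma LA_diff_low_moments:
  assumes "k \<le> 2*j"
  shows "pw_moment (LA_A j (Suc j) - LA_A (Suc j) j) (LA_B j (Suc j) - LA_B (Suc j) j) k = 0"
proof -
  have j: "1 \<le> j + Suc j" "1 \<le> Suc j + j" by simp_all
  note P1 = LA_props[OF near_diagonal_simps(3) j(1)] and P2 = LA_props[OF near_diagonal_simps(2) j(2)]
  show ?thesis
  proof (cases "k = 2*j")
    case True thus ?thesis unfolding pw_moment_diff using P1(4) P2(4) by (simp add: mult_2)
  next
    case False thus ?thesis unfolding pw_moment_diff using P1(3)[of k] P2(3)[of k] assms by simp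
  qed
qed

lemma LA_diff_eq_smult_diag:
  "LA_A j (Suc j) - LA_A (Suc j) j = Polynomial.smult (LA_c j) (LA_A (Suc j) (Suc j))"
  "LA_B j (Suc j) - LA_B (Suc j) j = Polynomial.smult (LA_c j) (LA_B (Suc j) (Suc j))"
proof -
  have j: "1 \<le> j + Suc j" "1 \<le> Suc j + j" "1 \<le> Suc j + Suc j" by simp_all
  note P1 = LA_props[OF near_diagonal_simps(3) j(1)] and P2 = LA_props[OF near_diagonal_simps(2) j(2)]
    and P3 = LA_props[OF near_diagonal_simps(1) j(3)]
  define X where "X = LA_A j (Suc j) - LA_A (Suc j) j - Polynomial.smult (LA_c j) (LA_A (Suc j) (Suc j))"
  define Y where "Y = LA_B j (Suc j) - LA_B (Suc j) j - Polynomial.smult (LA_c j) (LA_B (Suc j) (Suc j))"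
  have "X = 0 \<and> Y = 0"
  proof (rule pw_moments_zero_imp_zero[OF near_diagonal_simps(1)])
    show "deg_less (Suc j) X" unfolding X_def
      using P1(1) P2(1) P3(1) by (intro deg_less_diff deg_less_smult) (auto intro: deg_less_mono)
    show "deg_less (Suc j) Y" unfolding Y_def
      using P1(2) P2(2) P3(2) by (intro deg_less_diff deg_less_smult) (auto intro: deg_less_mono)
    fix k assume k: "k < Suc j + Suc j"
    show "pw_moment X Y k = 0"
    proof (cases "k \<le> 2*j")
      case True
      thus ?thesis using LA_diff_low_moments P3(3)[of k]
        unfolding X_def Y_def pw_moment_diff pw_moment_smult by simp
    next
      case False
      hence "k = 2*j+1" using k by simp
      thus ?thesis using P3(4) unfolding X_def Y_def pw_moment_diff pw_moment_smult LA_c_def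
        by (simp add: mult_2)
    qed
  qed
  thus "LA_A j (Suc j) - LA_A (Suc j) j = Polynomial.smult (LA_c j) (LA_A (Suc j) (Suc j))"
    "LA_B j (Suc j) - LA_B (Suc j) j = Polynomial.smult (LA_c j) (LA_B (Suc j) (Suc j))"
    unfolding X_def Y_def by simp_all
qed

lemma LA_P_diff_multiple: "\<exists>t. LA_P (Suc j) j - LA_P j (Suc j) = Polynomial.smult t (LA_P j j)"
proof -
  note Pa = LA_P_props[OF near_diagonal_simps(2), of j]
    and Pb = LA_P_props[OF near_diagonal_simps(3), of j]
    and Pc = LA_P_props[OF near_diagonal_simps(1), of j]
  define t where "t = coeff (LA_P (Suc j) j - LA_P j (Suc j)) (2*j)"
  define R where "R = LA_P (Suc j) j - LA_P j (Suc j) - Polynomial.smult t (LA_P j j)"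
  have "deg_less (Suc (2*j)) (LA_P (Suc j) j - LA_P j (Suc j))"
    using Pa Pb by (intro deg_less_diff_monic) auto
  moreover have "deg_less (Suc (2*j)) (LA_P j j)" "coeff (LA_P j j) (2*j) = 1"
    using Pc deg_less_Suc_degree[of "LA_P j j"] by (auto simp: mult_2)
  ultimately have "deg_less (j + j) R"
    unfolding R_def t_def mult_2[symmetric] by (intro deg_less_SucD[OF deg_less_diff[OF _ deg_less_smult]]) simp_all
  moreover have "pw_orth j j (LA_P (Suc j) j)" "pw_orth j j (LA_P j (Suc j))"
    using pw_orth_mono Pa Pb by (metis le_SucI order_refl)+
  hence "pw_orth j j R"
    unfolding R_def using Pc by (intro pw_orth_diff) (simp_all add: pw_orth_def pw_inner_smult1)
  ultimately have "R = 0" by (rule pw_orth_imp_zero[OF near_diagonal_simps(1)])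
  thus ?thesis unfolding R_def by auto
qed

lemma LA_a_Suc: "LA_a (Suc j) = LA_c j"
proof -
  obtain t where rel: "LA_P (Suc j) j - LA_P j (Suc j) = Polynomial.smult t (LA_P j j)"
    using LA_P_diff_multiple by blast
  note Pa = LA_P_props[OF near_diagonal_simps(2), of j]
    and Pb = LA_P_props[OF near_diagonal_simps(3), of j]
    and Pc = LA_P_props[OF near_diagonal_simps(1), of j]
  have j: "1 \<le> j + Suc j" "1 \<le> Suc j + j" by simp_all
  note Q1 = LA_props[OF near_diagonal_simps(3) j(1)] and Q2 = LA_props[OF near_diagonal_simps(2) j(2)]
  have "pw_inner (LA_P (Suc j) j) (LA_A j (Suc j) - LA_A (Suc j) j) (LA_B j (Suc j) - LA_B (Suc j) j) = LA_c j"
    using Pa LA_diff_low_moments unfolding LA_c_def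
    by (subst pw_inner_eq_top_moment[where d="2*j+1"]) (auto simp: mult_2)
  moreover have "pw_inner (LA_P (Suc j) j) (LA_A (Suc j) j) (LA_B (Suc j) j) = 0"
    using Pa Q2(1,2) unfolding pw_orth_def by blast
  moreover have "pw_inner (LA_P j (Suc j)) (LA_A j (Suc j)) (LA_B j (Suc j)) = 0"
    using Pb Q1(1,2) unfolding pw_orth_def by blast
  moreover have "pw_inner (LA_P j j) (LA_A j (Suc j)) (LA_B j (Suc j)) = 1"
    using Pc Q1(3,4) by (subst pw_inner_eq_top_moment[where d="2*j"]) (auto simp: mult_2)
  ultimately have "t = LA_c j"
    using arg_cong[OF rel, of "\<lambda>P. pw_inner P (LA_A j (Suc j)) (LA_B j (Suc j))"]
    by (simp add: pw_inner_diff1 pw_inner_diff2 pw_inner_smult1)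
  have nz: "LA_P j j \<noteq> 0" using Pc by (auto simp: mult_2)
  show ?thesis unfolding LA_a_def
  proof (rule the_equality)
    fix a assume "LA_P (Suc j) (Suc j - 1) - LA_P (Suc j - 1) (Suc j)
                  = Polynomial.smult a (LA_P (Suc j - 1) (Suc j - 1))"
    hence "Polynomial.smult (a - LA_c j) (LA_P j j) = 0"
      using rel \<open>t = LA_c j\<close> by (simp add: smult_diff_left)
    thus "a = LA_c j" using nz by simp
  qed (use rel \<open>t = LA_c j\<close> in simp)
qed

section \<open>Expansion in the Legendre--Angelesco functions\<close>

definition lacunary_moments :: "nat \<Rightarrow> real poly \<Rightarrow> real poly \<Rightarrow> bool" where
  "lacunary_moments p A B \<longleftrightarrow> (\<forall>k<p. pw_moment A B k = 0) \<and> (\<forall>k. odd (k + p) \<longrightarrow> pw_moment A B k = 0)"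

lemma lacunary_moments_step:
  assumes AB: "lacunary_moments p A B" and G: "lacunary_moments p GA GB" "pw_moment GA GB p = 1"
  defines "c \<equiv> pw_moment A B p"
  shows "lacunary_moments (p + 2) (A - Polynomial.smult c GA) (B - Polynomial.smult c GB)"
proof -
  have m: "pw_moment (A - Polynomial.smult c GA) (B - Polynomial.smult c GB) k
           = pw_moment A B k - c * pw_moment GA GB k" for k
    unfolding pw_moment_diff pw_moment_smult ..
  show ?thesis unfolding lacunary_moments_def m
  proof (intro conjI allI impI)
    fix k assume "k < p + 2"
    hence "k < p \<or> k = p \<or> odd (k + p)" by (auto simp: less_Suc_eq)
    thus "pw_moment A B k - c * pw_moment GA GB k = 0"
      using AB G unfolding lacunary_moments_def c_def by auto
  next
    fix k assume "odd (k + (p + 2))"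
    thus "pw_moment A B k - c * pw_moment GA GB k = 0"
      using AB G unfolding lacunary_moments_def by simp
  qed
qed

text \<open>Gaussian elimination against functions \<open>G\<^sub>j\<close> whose lacunary moment patterns start two orders
  apart: subtracting the right multiple of \<open>G\<^sub>s\<close> clears moment \<open>p\<^sub>s\<close>, and the parity condition clears
  moment \<open>p\<^sub>s + 1\<close> for free.\<close>
lemma lacunary_expansion:
  fixes GA GB :: "nat \<Rightarrow> real poly" and p :: "nat \<Rightarrow> nat"
  assumes "\<And>j. s \<le> j \<Longrightarrow> j < s + M \<Longrightarrow> deg_less n (GA j) \<and> deg_less n (GB j)
             \<and> lacunary_moments (p j) (GA j) (GB j) \<and> pw_moment (GA j) (GB j) (p j) = 1"
    and "\<And>j. s \<le> j \<Longrightarrow> p (Suc j) = p j + 2"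
    and "2*n \<le> p (s + M)" "deg_less n A" "deg_less n B" "lacunary_moments (p s) A B"
  shows "\<exists>c. A = (\<Sum>j\<in>{s..<s+M}. Polynomial.smult (c j) (GA j))
           \<and> B = (\<Sum>j\<in>{s..<s+M}. Polynomial.smult (c j) (GB j))"
  using assms
proof (induction M arbitrary: s A B)
  case 0
  hence "A = 0 \<and> B = 0"
    by (intro pw_moments_zero_imp_zero[OF near_diagonal_simps(1)]) (auto simp: lacunary_moments_def)
  thus ?case by simp
next
  case (Suc M)
  have Gs: "deg_less n (GA s)" "deg_less n (GB s)" "lacunary_moments (p s) (GA s) (GB s)"
    "pw_moment (GA s) (GB s) (p s) = 1"
    using Suc.prems(1)[of s] by simp_all
  define c0 where "c0 = pw_moment A B (p s)"
  have "\<exists>c. A - Polynomial.smult c0 (GA s) = (\<Sum>j\<in>{Suc s..<Suc s+M}. Polynomial.smult (c j) (GA j))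
          \<and> B - Polynomial.smult c0 (GB s) = (\<Sum>j\<in>{Suc s..<Suc s+M}. Polynomial.smult (c j) (GB j))"
  proof (rule Suc.IH)
    show "lacunary_moments (p (Suc s)) (A - Polynomial.smult c0 (GA s)) (B - Polynomial.smult c0 (GB s))"
      using lacunary_moments_step[OF Suc.prems(6) Gs(3,4)] Suc.prems(2)[of s] unfolding c0_def by simp
    show "deg_less n (A - Polynomial.smult c0 (GA s))" "deg_less n (B - Polynomial.smult c0 (GB s))"
      using Suc.prems(4,5) Gs(1,2) by (simp_all add: deg_less_diff deg_less_smult)
  qed (use Suc.prems in auto)
  then obtain c where
    "A - Polynomial.smult c0 (GA s) = (\<Sum>j\<in>{Suc s..<Suc s+M}. Polynomial.smult (c j) (GA j))"
    "B - Polynomial.smult c0 (GB s) = (\<Sum>j\<in>{Suc s..<Suc s+M}. Polynomial.smult (c j) (GB j))" by blast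
  moreover have "{s..<s + Suc M} = insert s {Suc s..<Suc s+M}" by auto
  ultimately show ?case
    by (intro exI[of _ "c(s := c0)"]) (simp add: algebra_simps)
qed

lemma pw_expansion_diag:
  assumes s: "1 \<le> s" "s \<le> n" and AB: "deg_less n A" "deg_less n B" "lacunary_moments (2 * s - 1) A B"
  shows "\<exists>c. \<forall>x. pw_poly A B x = (\<Sum>j=s..n. c j * LA_Q j j x)"
proof -
  have "\<exists>c. A = (\<Sum>j\<in>{s..<s+(n+1-s)}. Polynomial.smult (c j) (LA_A j j))
          \<and> B = (\<Sum>j\<in>{s..<s+(n+1-s)}. Polynomial.smult (c j) (LA_B j j))"
  proof (rule lacunary_expansion[where p="\<lambda>j. 2*j - 1"])
    fix j assume j: "s \<le> j" "j < s + (n + 1 - s)"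
    hence "1 \<le> j" "j \<le> n" "1 \<le> j + j" using s by auto
    note P = LA_props[OF near_diagonal_simps(1) \<open>1 \<le> j + j\<close>]
    have "deg_less n (LA_A j j)" "deg_less n (LA_B j j)"
      using P(1,2) \<open>j \<le> n\<close> deg_less_mono by blast+
    moreover have "lacunary_moments (2*j - 1) (LA_A j j) (LA_B j j)"
      unfolding lacunary_moments_def using P(3) \<open>1 \<le> j\<close>
      by (auto intro: LA_diag_even_moment)
    ultimately show "deg_less n (LA_A j j) \<and> deg_less n (LA_B j j)
        \<and> lacunary_moments (2*j - 1) (LA_A j j) (LA_B j j) \<and> pw_moment (LA_A j j) (LA_B j j) (2*j - 1) = 1"
      using P(4) by (simp add: mult_2)
  qed (use s AB in auto)
  moreover have "{s..<s+(n+1-s)} = {s..n}" using s by auto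
  ultimately show ?thesis by (auto simp: pw_poly_sum_smult LA_Q_eq_pw_poly)
qed

lemma LA_offdiag_odd_moment:
  assumes "odd k"
  shows "pw_moment (LA_A (Suc j) j) (LA_B (Suc j) j) k
         + LA_a (Suc j) / 2 * pw_moment (LA_A (Suc j) (Suc j)) (LA_B (Suc j) (Suc j)) k = 0"
proof -
  have "LA_a (Suc j) * pw_moment (LA_A (Suc j) (Suc j)) (LA_B (Suc j) (Suc j)) k
        = pw_moment (LA_A j (Suc j) - LA_A (Suc j) j) (LA_B j (Suc j) - LA_B (Suc j) j) k"
    unfolding LA_a_Suc LA_diff_eq_smult_diag pw_moment_smult ..
  also have "\<dots> = - 2 * pw_moment (LA_A (Suc j) j) (LA_B (Suc j) j) k"
    unfolding pw_moment_diff LA_swap_mirror pw_moment_mirror using assms by simp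
  finally show ?thesis by simp
qed

lemma offdiag_sum_reindex:
  fixes a d G H :: "nat \<Rightarrow> real"
  assumes "s < n"
  shows "(1/2) * (\<Sum>j = Suc s..n. a j * d (j - 1) * G j) + (\<Sum>j = s..n - 1. d j * H j)
       = (\<Sum>j\<in>{s..<n}. d j * (H j + a (Suc j) / 2 * G (Suc j)))"
proof -
  have ivl: "{Suc s..n} = {Suc s..Suc (n - 1)}" "{s..n - 1} = {s..<n}" using assms by auto
  have "(\<Sum>j = Suc s..n. a j * d (j - 1) * G j) = (\<Sum>j\<in>{s..<n}. a (Suc j) * d j * G (Suc j))"
    unfolding ivl sum.shift_bounds_cl_Suc_ivl by simp
  thus ?thesis unfolding ivl
    by (simp add: sum_distrib_left distrib_left sum.distrib mult_ac)
qed

lemma LA_offdiag_comb_moments: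
  fixes j :: nat
  defines "GA \<equiv> LA_A (Suc j) j + Polynomial.smult (LA_a (Suc j) / 2) (LA_A (Suc j) (Suc j))"
    and "GB \<equiv> LA_B (Suc j) j + Polynomial.smult (LA_a (Suc j) / 2) (LA_B (Suc j) (Suc j))"
  shows "lacunary_moments (2*j) GA GB" "pw_moment GA GB (2*j) = 1"
proof -
  have "1 \<le> Suc j + j" "1 \<le> Suc j + Suc j" by simp_all
  note P1 = LA_props[OF near_diagonal_simps(2) this(1)] and P2 = LA_props[OF near_diagonal_simps(1) this(2)]
  have m: "pw_moment GA GB k = pw_moment (LA_A (Suc j) j) (LA_B (Suc j) j) k
       + LA_a (Suc j) / 2 * pw_moment (LA_A (Suc j) (Suc j)) (LA_B (Suc j) (Suc j)) k" for k
    unfolding GA_def GB_def pw_moment_add pw_moment_smult ..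
  show "lacunary_moments (2*j) GA GB"
    unfolding lacunary_moments_def m using P1(3) P2(3) LA_offdiag_odd_moment by simp
  show "pw_moment GA GB (2*j) = 1"
    unfolding m using P1(4) P2(3)[of "2*j"] by (simp add: mult_2)
qed

lemma pw_expansion_offdiag:
  assumes s: "s < n" and AB: "deg_less n A" "deg_less n B" "lacunary_moments (2 * s) A B"
  shows "\<exists>d. \<forall>x. pw_poly A B x = (1/2) * (\<Sum>j = Suc s..n. LA_a j * d (j - 1) * LA_Q j j x)
                                 + (\<Sum>j = s..n - 1. d j * LA_Q (j + 1) j x)"
proof -
  define GA where "GA j = LA_A (Suc j) j + Polynomial.smult (LA_a (Suc j) / 2) (LA_A (Suc j) (Suc j))" for j
  define GB where "GB j = LA_B (Suc j) j + Polynomial.smult (LA_a (Suc j) / 2) (LA_B (Suc j) (Suc j))" for j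
  have "\<exists>d. A = (\<Sum>j\<in>{s..<s+(n-s)}. Polynomial.smult (d j) (GA j))
          \<and> B = (\<Sum>j\<in>{s..<s+(n-s)}. Polynomial.smult (d j) (GB j))"
  proof (rule lacunary_expansion[where p="\<lambda>j. 2*j"])
    fix j assume "s \<le> j" "j < s + (n - s)"
    hence "deg_less n (GA j) \<and> deg_less n (GB j)"
      unfolding GA_def GB_def using LA_props[of "Suc j" j] LA_props[of "Suc j" "Suc j"]
      by (auto intro!: deg_less_add deg_less_smult intro: deg_less_mono)
    thus "deg_less n (GA j) \<and> deg_less n (GB j)
        \<and> lacunary_moments (2*j) (GA j) (GB j) \<and> pw_moment (GA j) (GB j) (2*j) = 1"
      using LA_offdiag_comb_moments[of j] unfolding GA_def GB_def by blast
  qed (use s AB in auto)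
  moreover have "{s..<s+(n-s)} = {s..<n}" using s by auto
  ultimately obtain d where dA: "A = (\<Sum>j\<in>{s..<n}. Polynomial.smult (d j) (GA j))"
    and dB: "B = (\<Sum>j\<in>{s..<n}. Polynomial.smult (d j) (GB j))" by auto
  have "pw_poly A B x
        = (\<Sum>j\<in>{s..<n}. d j * (LA_Q (Suc j) j x + LA_a (Suc j) / 2 * LA_Q (Suc j) (Suc j) x))" for x
    unfolding dA dB pw_poly_sum_smult GA_def GB_def pw_poly_add_smult LA_Q_eq_pw_poly ..
  thus ?thesis
    using offdiag_sum_reindex[OF s, of LA_a d "\<lambda>j. LA_Q j j _" "\<lambda>j. LA_Q (Suc j) j _"]
    by (intro exI[of _ d]) simp
qed

lemma AE_eq_on_halves:
  fixes f g :: "real \<Rightarrow> real"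
  assumes "\<And>x. x \<in> {-1<..<0} \<union> {0<..<1} \<Longrightarrow> f x = g x"
  shows "AE x in lborel. x \<in> {-1..1} \<longrightarrow> f x = g x"
  using AE_lborel_singleton[of "-1::real"] AE_lborel_singleton[of "0::real"] AE_lborel_singleton[of "1::real"]
proof eventually_elim
  case (elim x)
  show ?case
  proof
    assume "x \<in> {-1..1}"
    with elim have "x \<in> {-1<..<0} \<union> {0<..<1}" by auto
    thus "f x = g x" by (rule assms)
  qed
qed

text \<open>By the symmetry condition, \<open>f\<^sub>k\<close> is the piecewise polynomial with right piece \<open>B = f\<^sub>k|(0,1)\<close>
  and left piece \<open>\<epsilon> B(-x)\<close>, \<open>\<epsilon> = (-1)\<^sup>k\<^sup>+\<^sup>n\<^sup>-\<^sup>1\<close>; the symmetry also kills every moment whose order has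
  the parity of \<open>k + n\<close>.\<close>
lemma alpert_eq_pw_poly:
  assumes alpert: "alpert_multiwavelets n f" and k: "1 \<le> k" "k \<le> n"
  obtains A B where "deg_less n A" "deg_less n B" "lacunary_moments (k + n - 1) A B"
    "AE x in lborel. x \<in> {-1..1} \<longrightarrow> f k x = pw_poly A B x"
proof -
  note af = alpert[unfolded alpert_multiwavelets_def]
  have kn: "k \<in> {1..n}" using k by simp
  obtain B :: "real poly" where B: "degree B \<le> n - 1" "\<And>t. t \<in> {0<..<1} \<Longrightarrow> f k t = poly B t"
    using af kn by blast
  define \<epsilon> :: real where "\<epsilon> = (-1) ^ (k + n - 1)"
  define A where "A = Polynomial.smult \<epsilon> (mirror B)"
  have A: "f k t = poly A t" if "t \<in> {-1<..<0}" for t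
  proof -
    have "- t \<in> {0<..<1}" using that by auto
    hence "f k (- (- t)) = \<epsilon> * f k (- t)" using af kn unfolding \<epsilon>_def by blast
    hence "f k t = \<epsilon> * f k (- t)" by simp
    thus ?thesis using B(2)[OF \<open>- t \<in> _\<close>] unfolding A_def by (simp add: poly_mirror)
  qed
  have degB: "deg_less n B" using B(1) k by (simp add: deg_less_iff)
  hence degA: "deg_less n A" unfolding A_def by (simp add: deg_less_smult deg_less_mirror)
  have \<epsilon>2: "\<epsilon> * \<epsilon> = 1" unfolding \<epsilon>_def by (simp add: power_mult_distrib[symmetric])
  have low: "pw_moment A B i = 0" if "i \<le> k + n - 2" for i
    using af kn that interval_integral_piecewise_poly[of "\<lambda>t. f k t * t ^ i" "monom 1 i * A" "monom 1 i * B"]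
    unfolding pw_moment_def pw_inner_def by (auto simp: A B(2) poly_monom mult.commute)
  have par: "\<epsilon> * pw_moment A B i = (-1)^i * pw_moment A B i" for i
    using \<epsilon>2 by (intro pw_moment_parity) (simp_all add: A_def pcompose_smult)
  have "pw_moment A B i = 0" if "odd (i + (k + n - 1))" for i
  proof -
    have "(-1::real)^i = - \<epsilon>"
      using that unfolding \<epsilon>_def by (cases "even i") simp_all
    hence "\<epsilon> * pw_moment A B i = 0" using par[of i] by simp
    thus ?thesis using \<epsilon>2 by auto
  qed
  with low have "lacunary_moments (k + n - 1) A B"
    unfolding lacunary_moments_def by simp
  moreover have "AE x in lborel. x \<in> {-1..1} \<longrightarrow> f k x = pw_poly A B x"
    by (rule AE_eq_on_halves) (auto simp: A B(2) pw_poly_left pw_poly_right)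
  ultimately show ?thesis using degA degB that by blast
qed

theorem proposition2:
  fixes n k :: nat and f :: "nat \<Rightarrow> real \<Rightarrow> real"
  assumes "alpert_multiwavelets n f" and "1 \<le> k" and "k \<le> n"
  shows "\<exists>c d :: nat \<Rightarrow> real. AE x in lborel. x \<in> {-1..1} \<longrightarrow>
    f k x = (if even (k + n)
             then (\<Sum>j = (k + n) div 2..n. c j * LA_Q j j x)
             else (1/2) * (\<Sum>j = (k + n + 1) div 2..n. LA_a j * d (j - 1) * LA_Q j j x)
                  + (\<Sum>j = (k + n - 1) div 2..n - 1. d j * LA_Q (j + 1) j x))"
proof -
  obtain A B where AB: "deg_less n A" "deg_less n B" "lacunary_moments (k + n - 1) A B"
    and f: "AE x in lborel. x \<in> {-1..1} \<longrightarrow> f k x = pw_poly A B x"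
    using alpert_eq_pw_poly[OF assms] .
  have f_eq: "AE x in lborel. x \<in> {-1..1} \<longrightarrow> f k x = g x" if "\<forall>x. pw_poly A B x = g x" for g
    using f by eventually_elim (simp add: that)
  show ?thesis
  proof (cases "even (k + n)")
    case True
    define s where "s = (k + n) div 2"
    have s: "1 \<le> s" "s \<le> n" "2 * s - 1 = k + n - 1"
      unfolding s_def using assms(2,3) True by presburger+
    then obtain c where "\<forall>x. pw_poly A B x = (\<Sum>j = s..n. c j * LA_Q j j x)"
      using pw_expansion_diag[OF s(1,2) AB(1,2)] AB(3) by auto
    thus ?thesis using f_eq True unfolding s_def by (intro exI[of _ c]) simp
  next
    case False
    define s where "s = (k + n - 1) div 2"
    have s: "s < n" "2 * s = k + n - 1" "(k + n + 1) div 2 = Suc s"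
      unfolding s_def using assms(2,3) False by presburger+
    then obtain d where "\<forall>x. pw_poly A B x = (1/2) * (\<Sum>j = Suc s..n. LA_a j * d (j - 1) * LA_Q j j x)
                                          + (\<Sum>j = s..n - 1. d j * LA_Q (j + 1) j x)"
      using pw_expansion_offdiag[OF s(1) AB(1,2)] AB(3) by auto
    thus ?thesis using f_eq False s(3) unfolding s_def by (intro exI[of _ d]) simp
  qed
qed

end
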